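(* For the iterates defined below, $$\|v_n\|_2\ge\sqrt{\eta}\cdot\Big(\sum_{i=1}^n\langle\phi(x_i),v_{i-1}\rangle^2\Big)^{1/2}.$$
   Context: Setting: $\phi(x_1),\dots,\phi(x_n)\in\mathbb{R}^d$ are feature vectors of samples $x_1,\dots,x_n$; $\eta\in(0,0.1)$ is a learning rate; $v_0\in\mathbb{R}^d$ is nonzero and $v_i=v_{i-1}+\eta\langle\phi(x_i),v_{i-1}\rangle\phi(x_i)$ for $i\in[n]$. *)

theory Defs
  imports "HOL-Analysis.Analysis"
begin

text \<open>Iterates: v 0 = v0, v i = v (i-1) + eta * <phi i, v (i-1)> * phi i,
  where phi i stands for the feature vector phi(x_i), i = 1..n.\<close>
primrec iterate :: "real \<Rightarrow> (nat \<Rightarrow> 'a::real_inner) \<Rightarrow> 'a \<Rightarrow> nat \<Rightarrow> 'a" where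
  "iterate \<eta> \<phi> v0 0 = v0"
| "iterate \<eta> \<phi> v0 (Suc i) =
     iterate \<eta> \<phi> v0 i + (\<eta> * (\<phi> (Suc i) \<bullet> iterate \<eta> \<phi> v0 i)) *\<^sub>R \<phi> (Suc i)"

end

theory Submission
  imports Defs
begin

text \<open>Each step adds \<open>2\<eta>a\<^sup>2 + \<eta>\<^sup>2a\<^sup>2\<parallel>\<phi> i\<parallel>\<^sup>2 \<ge> \<eta>a\<^sup>2\<close> to the squared norm, where
  \<open>a = \<langle>\<phi> i, v\<^sub>i\<^sub>-\<^sub>1\<rangle>\<close>; summing over the steps gives \<open>\<parallel>v\<^sub>n\<parallel>\<^sup>2 \<ge> \<eta> \<Sum> a\<^sup>2\<close>.\<close>

lemma norm_add_scaleR_inner_sq: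
  fixes v p :: "'a::real_inner"
  shows "(norm (v + (\<eta> * (p \<bullet> v)) *\<^sub>R p))\<^sup>2
           = (norm v)\<^sup>2 + 2 * \<eta> * (p \<bullet> v)\<^sup>2 + (\<eta> * (p \<bullet> v))\<^sup>2 * (norm p)\<^sup>2"
  unfolding power2_norm_eq_inner
  by (simp add: inner_add_left inner_add_right inner_commute algebra_simps power2_eq_square)

lemma norm_add_scaleR_inner_sq_ge:
  fixes v p :: "'a::real_inner"
  assumes "0 \<le> \<eta>"
  shows "(norm (v + (\<eta> * (p \<bullet> v)) *\<^sub>R p))\<^sup>2 \<ge> (norm v)\<^sup>2 + \<eta> * (p \<bullet> v)\<^sup>2"
  using assms by (simp add: norm_add_scaleR_inner_sq)

lemma norm_iterate_sq_ge:
  fixes \<phi> :: "nat \<Rightarrow> 'a::real_inner"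
  assumes "0 \<le> \<eta>"
  shows "(norm (iterate \<eta> \<phi> v0 n))\<^sup>2 \<ge> \<eta> * (\<Sum>i=1..n. (\<phi> i \<bullet> iterate \<eta> \<phi> v0 (i - 1))\<^sup>2)"
proof (induction n)
  case 0
  show ?case by simp
next
  case (Suc n)
  have "\<eta> * (\<Sum>i=1..Suc n. (\<phi> i \<bullet> iterate \<eta> \<phi> v0 (i - 1))\<^sup>2)
      = \<eta> * (\<Sum>i=1..n. (\<phi> i \<bullet> iterate \<eta> \<phi> v0 (i - 1))\<^sup>2)
        + \<eta> * (\<phi> (Suc n) \<bullet> iterate \<eta> \<phi> v0 n)\<^sup>2"
    by (simp add: distrib_left)
  also have "\<dots> \<le> (norm (iterate \<eta> \<phi> v0 n))\<^sup>2 + \<eta> * (\<phi> (Suc n) \<bullet> iterate \<eta> \<phi> v0 n)\<^sup>2"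
    using Suc.IH by simp
  also have "\<dots> \<le> (norm (iterate \<eta> \<phi> v0 (Suc n)))\<^sup>2"
    using norm_add_scaleR_inner_sq_ge[OF assms] by simp
  finally show ?case .
qed

theorem lemmaC7:
  fixes \<phi> :: "nat \<Rightarrow> 'a::euclidean_space" and v0 :: 'a and \<eta> :: real and n :: nat
  assumes "0 < \<eta>" and "\<eta> < 0.1" and "v0 \<noteq> 0"
  shows "norm (iterate \<eta> \<phi> v0 n)
           \<ge> sqrt \<eta> * sqrt (\<Sum>i=1..n. (\<phi> i \<bullet> iterate \<eta> \<phi> v0 (i - 1))\<^sup>2)"
proof -
  have "sqrt \<eta> * sqrt (\<Sum>i=1..n. (\<phi> i \<bullet> iterate \<eta> \<phi> v0 (i - 1))\<^sup>2)
      = sqrt (\<eta> * (\<Sum>i=1..n. (\<phi> i \<bullet> iterate \<eta> \<phi> v0 (i - 1))\<^sup>2))"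
    by (simp add: real_sqrt_mult)
  also have "\<dots> \<le> sqrt ((norm (iterate \<eta> \<phi> v0 n))\<^sup>2)"
    using norm_iterate_sq_ge assms(1) real_sqrt_le_mono less_imp_le by blast
  also have "\<dots> = norm (iterate \<eta> \<phi> v0 n)"
    by simp
  finally show ?thesis .
qed

end
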